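(* Let the branching factor satisfy $b>1$, let $\ell^*$ be the peak of the single-peaked sequence $\{\lambda_i\}$ and $\gamma>1$ a constant with $\sum_{j\ge i}\lambda_j\le\gamma\lambda_i$ for all $i\ge\ell^*+2$. Then for all $i\le\ell^*$, $\lambda_{i+1}\,x_i\le(\gamma+1)(h-i)$.
   Context: Galton–Watson branching process on an infinite $d$-ary tree (root at level $0$) with offspring distribution $D=\{c_j\}_{j=0}^d$, branching factor $b=\sum_j jc_j$; each non-root node independently holds an answer with probability $1/n$. Let $t(x)=\sum_jc_jx^j(1-\frac1n)^j$, $\phi_0=1$, $\phi_i=t(\phi_{i-1})$, $\lambda_i=\phi_{i-1}-\phi_i$. For $b>1$ the sequence $\{\lambda_i\}$ is single-peaked: there is a level $\ell^*$ with $\lambda_{i-1}\le\lambda_i$ for $i\le\ell^*$ and $\lambda_j>\lambda_{j+1}$ for $j\ge\ell^*$, and there is a constant $\gamma>1$ (independent of $n$) with $\sum_{j\ge i}\lambda_j\le\gamma\lambda_i$ for all $i\ge\ell^*+2$. For a level $h$, define $x_h=0$ and for $i\le h-1$, $x_i=\max_{i+1\le j\le h}\{x_j+\frac{j-i}{\lambda_{i+1}}\sum_{\ell=i+1}^h\lambda_\ell\}$ (the direct referral rewards of the DR mechanism). *)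

theory Defs
  imports "HOL-Analysis.Analysis"
begin

text \<open>Offspring generating function with answer-thinning:
  t(x) = sum_{j=0}^d c_j x^j (1 - 1/n)^j.\<close>
definition tgen :: "(nat \<Rightarrow> real) \<Rightarrow> nat \<Rightarrow> real \<Rightarrow> real \<Rightarrow> real" where
  "tgen c d n x = (\<Sum>j\<le>d. c j * x ^ j * (1 - 1 / n) ^ j)"

fun phi :: "(nat \<Rightarrow> real) \<Rightarrow> nat \<Rightarrow> real \<Rightarrow> nat \<Rightarrow> real" where
  "phi c d n 0 = 1"
| "phi c d n (Suc i) = tgen c d n (phi c d n i)"

text \<open>lambda_i = phi_(i-1) - phi_i for i >= 1 (lambda_0 is set to 0; it is never used).\<close>
definition lam :: "(nat \<Rightarrow> real) \<Rightarrow> nat \<Rightarrow> real \<Rightarrow> nat \<Rightarrow> real" where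
  "lam c d n i = (if i = 0 then 0 else phi c d n (i - 1) - phi c d n i)"

text \<open>Direct referral rewards for a level h, for a given sequence L (to be instantiated by lambda):
  x_h = 0 and for i <= h-1,
  x_i = max_{i+1 <= j <= h} (x_j + (j - i)/L_(i+1) * sum_{l=i+1}^h L_l).\<close>
function DRx :: "(nat \<Rightarrow> real) \<Rightarrow> nat \<Rightarrow> nat \<Rightarrow> real" where
  "DRx L h i = (if i < h then
      Max ((\<lambda>j. DRx L h j + real (j - i) / L (Suc i) * (\<Sum>l = Suc i..h. L l)) ` {Suc i..h})
    else 0)"
  by pat_completeness auto
termination
  by (relation "Wellfounded.measure (\<lambda>(L, h, i). h - i)") auto

end

theory Submission
  imports Defs
begin

text \<open>Write S k for the sum of the lambda_l with k < l \<le> h. The reward x_i is a maximum of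
  terms x_j + (j - i) * S i / lambda_(i+1), so by induction down from h we get
  w * x_i \<le> G * (h - i) as soon as every increment w * S k / lambda_(k+1) with i \<le> k < h
  is at most G. For w = lambda_(i+1) and G = gamma + 1 this holds: up to the peak,
  lambda_(i+1) \<le> lambda_(k+1) and S k \<le> phi_k \<le> 1; beyond the peak,
  S k \<le> lambda_(k+1) + gamma * lambda_(k+2) \<le> (gamma + 1) * lambda_(k+1) by the tail bound,
  while lambda_(i+1) \<le> 1.\<close>

declare DRx.simps [simp del]

lemma DRx_bound:
  fixes L :: "nat \<Rightarrow> real"
  assumes "0 \<le> w"
    and "\<And>k. i \<le> k \<Longrightarrow> k < h \<Longrightarrow> w * (\<Sum>l = Suc k..h. L l) / L (Suc k) \<le> G"
  shows "w * DRx L h i \<le> G * real (h - i)"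
  using assms(2)
proof (induction "h - i" arbitrary: i rule: less_induct)
  case less
  show ?case
  proof (cases "i < h")
    case False
    then show ?thesis by (simp add: DRx.simps)
  next
    case True
    define S where "S = (\<Sum>l = Suc i..h. L l)"
    let ?f = "\<lambda>j. DRx L h j + real (j - i) / L (Suc i) * S"
    have "Max (?f ` {Suc i..h}) \<in> ?f ` {Suc i..h}"
      using True by (intro Max_in) auto
    then obtain j where j: "j \<in> {Suc i..h}" and max: "Max (?f ` {Suc i..h}) = ?f j"
      by blast
    have IH: "w * DRx L h j \<le> G * real (h - j)"
      using less.hyps[of j] less.prems j by force
    have "w * DRx L h i = w * DRx L h j + real (j - i) * (w * S / L (Suc i))"
      using True max by (simp add: DRx.simps[of L h i] S_def algebra_simps)
    also have "\<dots> \<le> G * real (h - j) + real (j - i) * G"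
      using IH less.prems[of i] True by (intro add_mono mult_left_mono) (auto simp: S_def)
    also have "\<dots> = G * real (h - i)"
      using j by (simp add: algebra_simps of_nat_diff)
    finally show ?thesis .
  qed
qed

lemma increment_ratio_le:
  fixes w S \<mu> G :: real
  assumes "0 \<le> w" "w \<le> 1" "0 \<le> S" "S \<le> 1" "1 \<le> G"
    and "w \<le> \<mu> \<or> S \<le> G * \<mu>"
  shows "w * S / \<mu> \<le> G"
proof (cases "\<mu> > 0")
  case True
  from assms(6) show ?thesis
  proof
    assume "w \<le> \<mu>"
    then have "w * S \<le> \<mu> * 1" using assms by (intro mult_mono) auto
    then have "w * S / \<mu> \<le> 1" using True by (simp add: divide_le_eq)
    then show ?thesis using assms by linarith
  next
    assume "S \<le> G * \<mu>"
    moreover have "w * S \<le> S" using assms by (simp add: mult_left_le_one_le)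
    ultimately have "w * S \<le> G * \<mu>" by linarith
    then show ?thesis using True by (simp add: divide_le_eq)
  qed
next
  case False
  then have "w * S / \<mu> \<le> 0"
    using assms by (intro divide_nonneg_nonpos) auto
  then show ?thesis using assms by simp
qed

lemma mono_upto_of_step:
  fixes f :: "nat \<Rightarrow> real"
  assumes step: "\<And>i. 2 \<le> i \<Longrightarrow> i \<le> p \<Longrightarrow> f (i - 1) \<le> f i"
    and "1 \<le> a" "a \<le> b" "b \<le> p"
  shows "f a \<le> f b"
  using \<open>a \<le> b\<close> \<open>b \<le> p\<close>
proof (induction b rule: dec_induct)
  case (step m)
  then show ?case using assms(1)[of "Suc m"] \<open>1 \<le> a\<close> by simp
qed simp

lemma sum_atLeastAtMost_le_suminf:
  fixes f :: "nat \<Rightarrow> real"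
  assumes "\<And>l. 0 \<le> f l" and "summable (\<lambda>k. f (a + k))"
  shows "(\<Sum>l = a..b. f l) \<le> (\<Sum>k. f (a + k))"
proof (cases "a \<le> b")
  case True
  have "(\<Sum>l = a..b. f l) = (\<Sum>k = 0..b - a. f (a + k))"
    using True by (subst sum.atLeastAtMost_shift_0) (simp_all add: comp_def)
  also have "\<dots> \<le> (\<Sum>k. f (a + k))"
    using assms by (intro sum_le_suminf) auto
  finally show ?thesis .
next
  case False
  then show ?thesis using assms by (simp add: suminf_nonneg)
qed

lemma sum_le_tail_bound:
  fixes L :: "nat \<Rightarrow> real"
  assumes "\<And>l. 0 \<le> L l" and "summable (\<lambda>j. L (Suc (Suc k) + j))" and "0 \<le> \<gamma>"
    and "L (Suc (Suc k)) \<le> L (Suc k)"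
    and "(\<Sum>j. L (Suc (Suc k) + j)) \<le> \<gamma> * L (Suc (Suc k))"
  shows "(\<Sum>l = Suc k..h. L l) \<le> (\<gamma> + 1) * L (Suc k)"
proof (cases "Suc k \<le> h")
  case True
  have "(\<Sum>l = Suc (Suc k)..h. L l) \<le> \<gamma> * L (Suc k)"
    using sum_atLeastAtMost_le_suminf[of L "Suc (Suc k)" h, OF assms(1,2)] assms(5)
      mult_left_mono[OF assms(4) assms(3)] by linarith
  then show ?thesis
    using True by (simp add: sum.atLeast_Suc_atMost algebra_simps)
next
  case False
  then show ?thesis using assms(1,3) by simp
qed

lemma sum_lam_telescope:
  "k \<le> m \<Longrightarrow> (\<Sum>l = Suc k..m. lam c d n l) = phi c d n k - phi c d n m"
  by (induction m) (auto simp: lam_def le_Suc_eq)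

context
  fixes c :: "nat \<Rightarrow> real" and d :: nat and n :: real
  assumes c_nonneg: "\<And>j. j \<le> d \<Longrightarrow> 0 \<le> c j"
    and c_sum: "(\<Sum>j\<le>d. c j) = 1"
    and n_ge1: "1 \<le> n"
begin

lemma tgen_nonneg: "0 \<le> x \<Longrightarrow> 0 \<le> tgen c d n x"
  unfolding tgen_def using c_nonneg n_ge1 by (intro sum_nonneg) auto

lemma tgen_mono: "0 \<le> x \<Longrightarrow> x \<le> y \<Longrightarrow> tgen c d n x \<le> tgen c d n y"
  unfolding tgen_def using c_nonneg n_ge1
  by (intro sum_mono mult_right_mono mult_left_mono power_mono) auto

lemma tgen_one_le_one: "tgen c d n 1 \<le> 1"
proof -
  have "tgen c d n 1 \<le> (\<Sum>j\<le>d. c j)"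
    unfolding tgen_def using c_nonneg n_ge1
    by (intro sum_mono) (simp add: mult_left_le power_le_one)
  then show ?thesis using c_sum by simp
qed

lemma phi_nonneg: "0 \<le> phi c d n i"
  by (induction i) (simp_all add: tgen_nonneg)

lemma phi_Suc_le: "phi c d n (Suc i) \<le> phi c d n i"
proof (induction i)
  case (Suc i)
  then show ?case using tgen_mono[OF phi_nonneg[of "Suc i"]] by simp
qed (simp add: tgen_one_le_one)

lemma phi_le_one: "phi c d n i \<le> 1"
  by (induction i) (use phi_Suc_le order_trans in auto)

lemma lam_nonneg: "0 \<le> lam c d n i"
  using phi_Suc_le[of "i - 1"] by (cases i) (simp_all add: lam_def)

lemma lam_le_one: "lam c d n i \<le> 1"
  using phi_le_one[of "i - 1"] phi_nonneg[of i] by (cases i) (simp_all add: lam_def)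

lemma sum_lam_le_one: "(\<Sum>l = Suc k..m. lam c d n l) \<le> 1"
  using sum_lam_telescope[of k m c d n] phi_le_one[of k] phi_nonneg[of m]
  by (cases "k \<le> m") auto

lemma summable_lam_shift: "summable (\<lambda>j. lam c d n (Suc a + j))"
proof (rule summableI_nonneg_bounded)
  have "(\<Sum>j<N. lam c d n (Suc a + j)) = (\<Sum>l = Suc a..a + N. lam c d n l)" for N
    by (induction N) simp_all
  then show "(\<Sum>j<N. lam c d n (Suc a + j)) \<le> 1" for N
    using sum_lam_le_one by simp
qed (rule lam_nonneg)

end

theorem proposition5p4:
  fixes c :: "nat \<Rightarrow> real" and d :: nat and n :: nat
    and lstar h :: nat and \<gamma> :: real
  assumes c_nonneg: "\<And>j. j \<le> d \<Longrightarrow> c j \<ge> 0"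
    and c_sum: "(\<Sum>j\<le>d. c j) = 1"
    and n_pos: "n \<ge> 1"
    and b_gt1: "(\<Sum>j\<le>d. real j * c j) > 1"
    and lstar_pos: "lstar \<ge> 1"
    and incr: "\<And>i. 2 \<le> i \<Longrightarrow> i \<le> lstar \<Longrightarrow> lam c d n (i - 1) \<le> lam c d n i"
    and decr: "\<And>j. j \<ge> lstar \<Longrightarrow> lam c d n j > lam c d n (Suc j)"
    and gamma_gt1: "\<gamma> > 1"
    and gamma_tail: "\<And>i. i \<ge> lstar + 2 \<Longrightarrow> (\<Sum>k. lam c d n (i + k)) \<le> \<gamma> * lam c d n i"
  shows "\<forall>i. i \<le> lstar \<and> i \<le> h \<longrightarrow>
           lam c d n (Suc i) * DRx (lam c d n) h i \<le> (\<gamma> + 1) * real (h - i)"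
proof (intro allI impI)
  fix i assume "i \<le> lstar \<and> i \<le> h"
  let ?L = "lam c d n"
  have n: "1 \<le> real n" using n_pos by simp
  note lam_facts = lam_nonneg[OF c_nonneg c_sum n] lam_le_one[OF c_nonneg c_sum n]
  show "?L (Suc i) * DRx ?L h i \<le> (\<gamma> + 1) * real (h - i)"
  proof (rule DRx_bound[OF lam_facts(1)])
    fix k assume "i \<le> k" "k < h"
    have "?L (Suc i) \<le> ?L (Suc k) \<or> (\<Sum>l = Suc k..h. ?L l) \<le> (\<gamma> + 1) * ?L (Suc k)"
    proof (cases "Suc k \<le> lstar")
      case True
      then show ?thesis
        using mono_upto_of_step[where f = ?L and p = lstar, OF incr] \<open>i \<le> k\<close> by simp
    next
      case False
      have "(\<Sum>l = Suc k..h. ?L l) \<le> (\<gamma> + 1) * ?L (Suc k)"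
      proof (rule sum_le_tail_bound)
        show "?L (Suc (Suc k)) \<le> ?L (Suc k)"
          using decr[of "Suc k"] False by simp
        show "(\<Sum>j. ?L (Suc (Suc k) + j)) \<le> \<gamma> * ?L (Suc (Suc k))"
          using gamma_tail[of "Suc (Suc k)"] False by simp
      qed (use lam_facts(1) summable_lam_shift[OF c_nonneg c_sum n, of "Suc k"] gamma_gt1 in auto)
      then show ?thesis ..
    qed
    then show "?L (Suc i) * (\<Sum>l = Suc k..h. ?L l) / ?L (Suc k) \<le> \<gamma> + 1"
      using lam_facts sum_lam_le_one[OF c_nonneg c_sum n] gamma_gt1
      by (intro increment_ratio_le) (auto intro: sum_nonneg)
  qed
qed

end
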